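(* Let $K\subset\mathbb{T}$ be a Kronecker set with more than one point and let $T\in L(C(K))$ be $Tf(z)=zf(z)$. Then $T$ is not weakly supercyclic, while the set $\{aT^k\mathbf{1}+aT^m\mathbf{1}:a\in[0,\infty),\ k,m\in\mathbb{Z}_+\}$ is norm dense in $C(K)$.
   Context: $\mathbb{T}=\{z\in\mathbb{C}:|z|=1\}$; $C(K)$ is the complex Banach space of continuous functions on $K$ with sup norm; $\mathbf{1}$ is the constant function 1. A non-empty compact $K\subset\mathbb{T}$ is a Kronecker set if $\{u_n|_K:n\in\mathbb{Z}_+\}$, $u_n(z)=z^n$, is dense in $C(K,\mathbb{T})$ for the uniform metric. $T$ is weakly supercyclic if for some $x$ the set $\{zT^nx:z\in\mathbb{C},n\in\mathbb{Z}_+\}$ is weakly dense. *)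

theory Defs
  imports "HOL-Analysis.Analysis"
begin

text \<open>C(K) is modelled as the continuous functions K -> complex, extended by 0 outside K.\<close>
definition CK :: "complex set \<Rightarrow> (complex \<Rightarrow> complex) set" where
  "CK K = {f. continuous_on K f \<and> (\<forall>z. z \<notin> K \<longrightarrow> f z = 0)}"

definition supnorm :: "complex set \<Rightarrow> (complex \<Rightarrow> complex) \<Rightarrow> real" where
  "supnorm K f = Sup ((\<lambda>z. norm (f z)) ` K)"

definition kronecker_set :: "complex set \<Rightarrow> bool" where
  "kronecker_set K \<longleftrightarrow> K \<noteq> {} \<and> compact K \<and> K \<subseteq> sphere 0 1 \<and>
     (\<forall>g. continuous_on K g \<and> g ` K \<subseteq> sphere 0 1 \<longrightarrow>
        (\<forall>e>0. \<exists>n::nat. \<forall>z\<in>K. norm (z ^ n - g z) < e))"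

definition dualCK :: "complex set \<Rightarrow> ((complex \<Rightarrow> complex) \<Rightarrow> complex) set" where
  "dualCK K = {\<phi>. (\<forall>f\<in>CK K. \<forall>g\<in>CK K. \<phi> (\<lambda>z. f z + g z) = \<phi> f + \<phi> g) \<and>
                  (\<forall>c. \<forall>f\<in>CK K. \<phi> (\<lambda>z. c * f z) = c * \<phi> f) \<and>
                  (\<exists>M. \<forall>f\<in>CK K. norm (\<phi> f) \<le> M * supnorm K f)}"

text \<open>Density in the weak topology of C(K): every basic weak neighbourhood of every
  point of C(K) meets S.\<close>
definition weakly_dense :: "complex set \<Rightarrow> (complex \<Rightarrow> complex) set \<Rightarrow> bool" where
  "weakly_dense K S \<longleftrightarrow> S \<subseteq> CK K \<and>
     (\<forall>f\<in>CK K. \<forall>\<Phi>. finite \<Phi> \<and> \<Phi> \<subseteq> dualCK K \<longrightarrow>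
        (\<forall>e>0. \<exists>s\<in>S. \<forall>\<phi>\<in>\<Phi>. norm (\<phi> s - \<phi> f) < e))"

definition weakly_supercyclic ::
  "complex set \<Rightarrow> ((complex \<Rightarrow> complex) \<Rightarrow> (complex \<Rightarrow> complex)) \<Rightarrow> bool" where
  "weakly_supercyclic K T \<longleftrightarrow>
     (\<exists>x\<in>CK K. weakly_dense K {(\<lambda>z. c * (T ^^ n) x z) | c n. True})"

definition mult_op :: "complex set \<Rightarrow> (complex \<Rightarrow> complex) \<Rightarrow> (complex \<Rightarrow> complex)" where
  "mult_op K f = (\<lambda>z. if z \<in> K then z * f z else 0)"

definition one_K :: "complex set \<Rightarrow> complex \<Rightarrow> complex" where
  "one_K K = (\<lambda>z. if z \<in> K then 1 else 0)"

end

theory Submission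
  imports Defs
begin

text \<open>
  Non-supercyclicity: since \<open>|z| = 1\<close> on \<open>K\<close>, every element \<open>c T\<^sup>n x\<close> of a projective orbit
  satisfies \<open>|(c T\<^sup>n x)(y)| = |c| |x(y)|\<close>.  Weak density lets us approximate, simultaneously at
  two points \<open>a \<noteq> b\<close> (point evaluations are continuous functionals), a function vanishing at
  \<open>a\<close> but not at \<open>b\<close>, and one vanishing at \<open>b\<close> but not at \<open>a\<close>.  The first forces
  \<open>|x(a)| < |x(b)|\<close>, the second the reverse.

  Density of \<open>a(T\<^sup>k 1 + T\<^sup>m 1)\<close>: the Kronecker property yields \<open>z\<^sup>N \<approx> 1\<close> on \<open>K\<close>, so projecting
  each point onto a nearby \<open>N\<close>-th root of unity gives a continuous map close to the identity with
  finite range.  Hence every \<open>f \<in> C(K)\<close> is uniformly close to a continuous function \<open>\<phi>\<close> of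
  finite range.  After scaling, \<open>\<phi>/a\<close> takes values in the disc of radius 2, and since its range
  is finite it splits continuously as \<open>g\<^sub>1 + g\<^sub>2\<close> with unimodular \<open>g\<^sub>i\<close>.  Finally the Kronecker
  property approximates \<open>g\<^sub>1, g\<^sub>2\<close> by powers \<open>z\<^sup>k, z\<^sup>m\<close>.
\<close>

lemma mult_op_iterate: "z \<in> K \<Longrightarrow> (mult_op K ^^ n) h z = z ^ n * h z"
  by (induction n) (auto simp: mult_op_def)

lemma supnorm_upper:
  assumes "compact K" "continuous_on K h" "y \<in> K"
  shows "norm (h y) \<le> supnorm K h"
proof -
  have "compact ((\<lambda>z. norm (h z)) ` K)"
    by (intro compact_continuous_image continuous_intros assms(1,2))
  then have "bdd_above ((\<lambda>z. norm (h z)) ` K)"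
    by (simp add: compact_imp_bounded bounded_imp_bdd_above)
  then show ?thesis
    using assms(3) by (simp add: supnorm_def cSup_upper)
qed

lemma supnorm_least: "K \<noteq> {} \<Longrightarrow> (\<And>z. z \<in> K \<Longrightarrow> norm (h z) \<le> c) \<Longrightarrow> supnorm K h \<le> c"
  unfolding supnorm_def by (intro cSUP_least) auto

lemma extension_by_zero_in_CK:
  "continuous_on K g \<Longrightarrow> (\<lambda>z. if z \<in> K then g z else 0) \<in> CK K"
  unfolding CK_def by (auto intro: continuous_on_eq)

lemma point_evaluation_in_dual:
  assumes "compact K" "y \<in> K"
  shows "(\<lambda>h. h y) \<in> dualCK K"
  unfolding dualCK_def
  using supnorm_upper[OF assms(1) _ assms(2)] by (auto simp: CK_def intro!: exI[of _ 1])

lemma weakly_dense_interpolates: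
  assumes "weakly_dense K S" "compact K" "finite P" "P \<subseteq> K" "f \<in> CK K" "e > 0"
  shows "\<exists>s\<in>S. \<forall>y\<in>P. norm (s y - f y) < e"
proof -
  have "finite ((\<lambda>y h. h y) ` P)" "(\<lambda>y h. h y) ` P \<subseteq> dualCK K"
    using assms(3,4) point_evaluation_in_dual[OF assms(2)] by auto
  then show ?thesis
    using assms(1,5,6) unfolding weakly_dense_def by fast
qed

lemma orbit_modulus:
  assumes "y \<in> K" "norm y = 1"
  shows "norm (c * (mult_op K ^^ n) x y) = norm c * norm (x y)"
  using assms by (simp add: mult_op_iterate norm_mult norm_power)

theorem mult_op_not_weakly_supercyclic:
  assumes kr: "kronecker_set K" and ab: "a \<in> K" "b \<in> K" "a \<noteq> b"
  shows "\<not> weakly_supercyclic K (mult_op K)"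
proof
  assume "weakly_supercyclic K (mult_op K)"
  then obtain x where dense: "weakly_dense K {(\<lambda>z. c * (mult_op K ^^ n) x z) | c n. True}"
    unfolding weakly_supercyclic_def by blast
  have cK: "compact K" and unit: "norm a = 1" "norm b = 1"
    using kr ab by (auto simp: kronecker_set_def)
  define d where "d = norm (a - b)"
  have "d > 0" using ab by (simp add: d_def)
  have approx: "\<exists>c n. norm (c * (mult_op K ^^ n) x p - f p) < d/2 \<and>
                      norm (c * (mult_op K ^^ n) x q - f q) < d/2"
    if "f \<in> CK K" "p \<in> K" "q \<in> K" for f p q
    using weakly_dense_interpolates[OF dense cK, of "{p, q}" f "d/2"] that \<open>d > 0\<close> by auto
  text \<open>Approximating the function vanishing at \<open>p\<close> with value \<open>q - p\<close> at \<open>q\<close> forces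
    \<open>|x p| < |x q|\<close>, because every orbit element scales \<open>|x|\<close> by the same factor at both points.\<close>
  have smaller: "norm (x p) < norm (x q)"
    if "p \<in> K" "q \<in> K" "norm p = 1" "norm q = 1" "norm (q - p) = d" for p q
  proof -
    have "continuous_on K (\<lambda>z. z - p)" by (intro continuous_intros)
    from approx[OF extension_by_zero_in_CK[OF this] that(1,2)] that(1,2) obtain c n
      where small: "norm (c * (mult_op K ^^ n) x p) < d/2"
        and near: "norm (c * (mult_op K ^^ n) x q - (q - p)) < d/2"
      by auto
    have "d/2 < norm (c * (mult_op K ^^ n) x q)"
      using near norm_triangle_ineq2[of "q - p" "c * (mult_op K ^^ n) x q"] that(5)
      by (simp add: norm_minus_commute)
    with small have "norm c * norm (x p) < norm c * norm (x q)"
      using orbit_modulus that(1-4) by (metis order.strict_trans)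
    then show ?thesis
      by (simp add: mult_less_cancel_left)
  qed
  have "norm (b - a) = d" by (simp add: d_def norm_minus_commute)
  with smaller[of a b] smaller[of b a] ab unit show False
    by (simp add: d_def)
qed

lemma sum_of_two_unimodular:
  assumes "norm w \<le> 2"
  shows "\<exists>u v. norm u = 1 \<and> norm v = 1 \<and> u + v = (w::complex)"
proof -
  let ?r = "norm w" and ?t = "Arg w"
  let ?p = "arccos (?r / 2)"
  have "cos ?p = ?r / 2"
    using assms norm_ge_zero[of w] by (intro cos_arccos) linarith+
  then have "cis (?t + ?p) + cis (?t - ?p) = rcis ?r ?t"
    by (simp add: complex_eq_iff cos_add sin_add cos_diff sin_diff rcis_def)
  also have "\<dots> = w" by (rule rcis_cmod_Arg)
  finally show ?thesis by (metis norm_cis)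
qed

text \<open>A continuous function of finite range bounded by 2 is a sum of two continuous unimodular
  functions: choosing a decomposition for each of the finitely many values is automatically continuous.\<close>
lemma finite_range_unimodular_split:
  assumes "continuous_on K h" "finite (h ` K)" "\<And>z. z \<in> K \<Longrightarrow> norm (h z) \<le> 2"
  obtains g1 g2 :: "'a::topological_space \<Rightarrow> complex"
  where "continuous_on K g1" "continuous_on K g2"
    "g1 ` K \<subseteq> sphere 0 1" "g2 ` K \<subseteq> sphere 0 1" "\<And>z. z \<in> K \<Longrightarrow> g1 z + g2 z = h z"
proof -
  define P where "P w = (SOME (u, v). norm u = 1 \<and> norm v = 1 \<and> u + v = w)" for w :: complex
  have P: "norm (fst (P (h z))) = 1 \<and> norm (snd (P (h z))) = 1 \<and> fst (P (h z)) + snd (P (h z)) = h z"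
    if z: "z \<in> K" for z
  proof -
    obtain u v where "norm u = 1 \<and> norm v = 1 \<and> u + v = h z"
      using sum_of_two_unimodular assms(3)[OF z] by blast
    then have "\<exists>p. (\<lambda>(u, v). norm u = 1 \<and> norm v = 1 \<and> u + v = h z) p" by blast
    from someI_ex[OF this] show ?thesis by (auto simp: P_def split: prod.splits)
  qed
  have "continuous_on K ((fst \<circ> P) \<circ> h)" "continuous_on K ((snd \<circ> P) \<circ> h)"
    by (intro continuous_on_compose assms(1) continuous_on_finite assms(2))+
  with P show ?thesis
    by (intro that[of "fst \<circ> P \<circ> h" "snd \<circ> P \<circ> h"]) auto
qed

lemma finite_range_approximation:
  fixes f :: "'a::metric_space \<Rightarrow> 'b::metric_space"
  assumes "compact K" "continuous_on K f" "e > 0"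
    and retract: "\<And>\<delta>. \<delta> > 0 \<Longrightarrow> \<exists>\<omega>. continuous_on K \<omega> \<and> finite (\<omega> ` K) \<and> (\<forall>z\<in>K. dist (\<omega> z) z < \<delta>)"
  obtains \<phi> where "continuous_on K \<phi>" "finite (\<phi> ` K)" "\<And>z. z \<in> K \<Longrightarrow> dist (\<phi> z) (f z) < e"
proof -
  obtain \<delta> where "\<delta> > 0" and \<delta>: "\<And>y z. y \<in> K \<Longrightarrow> z \<in> K \<Longrightarrow> dist y z < \<delta> \<Longrightarrow> dist (f y) (f z) < e"
    using compact_uniformly_continuous[OF assms(2,1)] assms(3)
    unfolding uniformly_continuous_on_def by metis
  obtain \<omega> where \<omega>: "continuous_on K \<omega>" "finite (\<omega> ` K)" "\<And>z. z \<in> K \<Longrightarrow> dist (\<omega> z) z < \<delta>/2"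
    using retract[of "\<delta>/2"] \<open>\<delta> > 0\<close> by auto
  text \<open>Pick one point of \<open>K\<close> in each fibre of \<open>\<omega>\<close>; nearby points lie in nearby fibres.\<close>
  define c where "c w = (SOME y. y \<in> K \<and> \<omega> y = w)" for w
  have c: "c (\<omega> z) \<in> K \<and> \<omega> (c (\<omega> z)) = \<omega> z" if "z \<in> K" for z
    unfolding c_def by (rule someI[of _ z]) (use that in auto)
  have "continuous_on K ((f \<circ> c) \<circ> \<omega>)"
    by (intro continuous_on_compose \<omega>(1) continuous_on_finite \<omega>(2))
  moreover have "finite ((f \<circ> c \<circ> \<omega>) ` K)"
    using \<omega>(2) by (metis finite_imageI image_comp)
  moreover have "dist ((f \<circ> c \<circ> \<omega>) z) (f z) < e" if "z \<in> K" for z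
  proof -
    have "dist (c (\<omega> z)) z \<le> dist (c (\<omega> z)) (\<omega> z) + dist (\<omega> z) z"
      by (rule dist_triangle)
    also have "\<dots> < \<delta>" using \<omega>(3)[OF that] \<omega>(3)[of "c (\<omega> z)"] c[OF that]
      by (simp add: dist_commute)
    finally show ?thesis using \<delta> c[OF that] that by simp
  qed
  ultimately show ?thesis by (rule that)
qed

lemma exp_near_one:
  assumes "d > 0"
  shows "\<exists>r>0. \<forall>u::complex. norm u < r \<longrightarrow> norm (exp u - 1) < d"
  using continuous_at_eps_delta[THEN iffD1, OF isCont_exp[of 0], rule_format, OF assms]
  by (auto simp: dist_norm)

text \<open>Projection of \<open>z\<close> (with \<open>z\<^sup>N\<close> near \<open>1\<close>) onto an \<open>N\<close>-th root of unity, via the principal logarithm of \<open>z\<^sup>N\<close>.\<close>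
definition root_projection :: "nat \<Rightarrow> complex \<Rightarrow> complex" where
  "root_projection N z = z * exp (- Ln (z ^ N) / of_nat N)"

lemma root_projection_root:
  assumes "N > 0" "z \<noteq> 0"
  shows "root_projection N z ^ N = 1"
proof -
  have "exp (- Ln (z ^ N) / of_nat N) ^ N = exp (- Ln (z ^ N))"
    using assms(1) by (simp add: exp_of_nat_mult[symmetric])
  also have "\<dots> = inverse (z ^ N)"
    using assms(2) by (simp add: exp_minus)
  finally show ?thesis
    using assms(2) by (simp add: root_projection_def power_mult_distrib)
qed

lemma near_one_not_nonpos_real: "norm (w - 1 :: complex) < 1 \<Longrightarrow> w \<notin> \<real>\<^sub>\<le>\<^sub>0"
proof
  assume "w \<in> \<real>\<^sub>\<le>\<^sub>0" and "norm (w - 1) < 1"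
  then obtain t where t: "w = of_real t" "t \<le> 0" by (auto elim: nonpos_Reals_cases)
  then have "w - 1 = of_real (t - 1)" by simp
  then have "norm (w - 1) = 1 - t" using t(2) by (simp only: norm_of_real)
  with t(2) \<open>norm (w - 1) < 1\<close> show False by simp
qed

lemma root_projection_continuous:
  assumes "N > 0" "\<And>z. z \<in> K \<Longrightarrow> norm (z ^ N - 1) < 1"
  shows "continuous_on K (root_projection N)"
  unfolding root_projection_def using assms near_one_not_nonpos_real
  by (intro continuous_intros) auto

lemma root_projection_near:
  assumes "N > 0" "norm z = 1" "norm (z ^ N - 1) < 1/2"
  shows "\<exists>u::complex. norm u \<le> 2 * norm (z ^ N - 1) \<and> norm (root_projection N z - z) = norm (exp u - 1)"
proof -
  let ?u = "- Ln (z ^ N) / of_nat N"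
  have "norm (Ln (z ^ N)) \<le> 2 * norm (z ^ N - 1)"
    using norm_Ln_le[of "z ^ N - 1"] assms(3) by simp
  moreover have "norm ?u \<le> norm (Ln (z ^ N))"
    using assms(1) by (simp add: norm_divide divide_le_eq mult_le_cancel_left1)
  ultimately have small: "norm ?u \<le> 2 * norm (z ^ N - 1)" by linarith
  have "root_projection N z - z = z * (exp ?u - 1)"
    by (simp add: root_projection_def algebra_simps)
  then have "norm (root_projection N z - z) = norm (exp ?u - 1)"
    by (simp add: norm_mult assms(2))
  with small show ?thesis by blast
qed

text \<open>On a Kronecker set some power \<open>z\<^sup>N\<close> is uniformly close to \<open>1\<close>: approximate \<open>cnj z = 1/z\<close> by \<open>z\<^sup>n\<close>.\<close>
lemma kronecker_power_near_one:
  assumes "kronecker_set K" "\<eta> > 0"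
  obtains N where "N > 0" "\<And>z. z \<in> K \<Longrightarrow> norm (z ^ N - 1) < \<eta>"
proof -
  have unit: "K \<subseteq> sphere 0 1"
    using assms(1) by (simp add: kronecker_set_def)
  then have "continuous_on K cnj" "cnj ` K \<subseteq> sphere 0 1"
    by (auto intro: continuous_intros)
  then obtain n where n: "\<And>z. z \<in> K \<Longrightarrow> norm (z ^ n - cnj z) < \<eta>"
    using assms unfolding kronecker_set_def by blast
  have "norm (z ^ Suc n - 1) < \<eta>" if "z \<in> K" for z
  proof -
    have "norm z = 1" using unit that by auto
    then have "z * cnj z = 1" using complex_norm_square[of z] by simp
    then have "z ^ Suc n - 1 = z * (z ^ n - cnj z)" by (simp add: algebra_simps)
    then show ?thesis using n[OF that] \<open>norm z = 1\<close> by (simp add: norm_mult)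
  qed
  then show ?thesis by (intro that[of "Suc n"]) auto
qed

lemma kronecker_finite_range_retraction:
  assumes "kronecker_set K" "\<delta> > 0"
  shows "\<exists>\<omega>. continuous_on K \<omega> \<and> finite (\<omega> ` K) \<and> (\<forall>z\<in>K. dist (\<omega> z) z < \<delta>)"
proof -
  obtain r where "r > 0" and r: "\<And>u::complex. norm u < r \<Longrightarrow> norm (exp u - 1) < \<delta>"
    using exp_near_one[OF assms(2)] by auto
  define \<eta> where "\<eta> = min (1/2) (r/2)"
  have "\<eta> > 0" using \<open>r > 0\<close> by (simp add: \<eta>_def)
  obtain N where "N > 0" and N: "\<And>z. z \<in> K \<Longrightarrow> norm (z ^ N - 1) < \<eta>"
    using kronecker_power_near_one[OF assms(1) \<open>\<eta> > 0\<close>] by blast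
  have unit: "\<And>z. z \<in> K \<Longrightarrow> norm z = 1"
    using assms(1) by (auto simp: kronecker_set_def)
  have "\<eta> < 1" by (simp add: \<eta>_def)
  then have cont: "continuous_on K (root_projection N)"
    using N by (intro root_projection_continuous[OF \<open>N > 0\<close>]) (meson less_trans)
  have "root_projection N z ^ N = 1" if "z \<in> K" for z
  proof -
    have "z \<noteq> 0" using unit[OF that] by auto
    then show ?thesis by (rule root_projection_root[OF \<open>N > 0\<close>])
  qed
  then have "root_projection N ` K \<subseteq> {w. w ^ N = 1}" by blast
  moreover have "finite {w :: complex. w ^ N = 1}"
    using finite_roots_unity[of N] \<open>N > 0\<close> by simp
  ultimately have fin: "finite (root_projection N ` K)" by (rule finite_subset)
  have "dist (root_projection N z) z < \<delta>" if z: "z \<in> K" for z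
  proof -
    obtain u :: complex where "norm u \<le> 2 * norm (z ^ N - 1)"
      and "norm (root_projection N z - z) = norm (exp u - 1)"
      using root_projection_near[OF \<open>N > 0\<close> unit[OF z]] N[OF z] by (auto simp: \<eta>_def)
    moreover have "2 * norm (z ^ N - 1) < r" using N[OF z] by (simp add: \<eta>_def)
    ultimately show ?thesis using r by (simp add: dist_norm)
  qed
  with cont fin show ?thesis by blast
qed

lemma kronecker_approx_by_unimodular_sums:
  fixes f :: "complex \<Rightarrow> complex" and e :: real
  assumes kr: "kronecker_set K" and fc: "continuous_on K f" and "e > 0"
  obtains a :: real and g1 g2 where "a > 0" "continuous_on K g1" "continuous_on K g2"
    "g1 ` K \<subseteq> sphere 0 1" "g2 ` K \<subseteq> sphere 0 1"
    "\<And>z. z \<in> K \<Longrightarrow> norm (of_real a * (g1 z + g2 z) - f z) < e"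
proof -
  have cK: "compact K" and "K \<noteq> {}"
    using kr by (auto simp: kronecker_set_def)
  obtain \<phi> where \<phi>: "continuous_on K \<phi>" "finite (\<phi> ` K)" "\<And>z. z \<in> K \<Longrightarrow> dist (\<phi> z) (f z) < e"
    using finite_range_approximation[OF cK fc \<open>e > 0\<close>] kronecker_finite_range_retraction[OF kr]
    by auto
  text \<open>Scale so that \<open>\<phi>\<close> takes values in the disc of radius \<open>2a\<close>.\<close>
  define a where "a = supnorm K f + e"
  obtain z0 where "z0 \<in> K" using \<open>K \<noteq> {}\<close> by blast
  then have "a > 0"
    using supnorm_upper[OF cK fc \<open>z0 \<in> K\<close>] \<open>e > 0\<close> norm_ge_zero[of "f z0"] unfolding a_def by linarith
  have bounded: "norm (\<phi> z / of_real a) \<le> 2" if "z \<in> K" for z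
  proof -
    have "norm (\<phi> z) \<le> norm (f z) + e"
      using \<phi>(3)[OF that] norm_triangle_ineq2[of "\<phi> z" "f z"] by (simp add: dist_norm)
    also have "\<dots> \<le> 2 * a"
      using supnorm_upper[OF cK fc that] \<open>e > 0\<close> \<open>a > 0\<close> by (simp add: a_def)
    finally show ?thesis using \<open>a > 0\<close> by (simp add: norm_divide divide_le_eq)
  qed
  have cont: "continuous_on K (\<lambda>z. \<phi> z / of_real a)"
    using \<phi>(1) \<open>a > 0\<close> by (intro continuous_intros) auto
  have fin: "finite ((\<lambda>z. \<phi> z / of_real a) ` K)"
    using finite_imageI[OF \<phi>(2), of "\<lambda>w. w / of_real a"] by (simp add: image_image)
  obtain g1 g2 where g: "continuous_on K g1" "continuous_on K g2"
    "g1 ` K \<subseteq> sphere 0 1" "g2 ` K \<subseteq> sphere 0 1" "\<And>z. z \<in> K \<Longrightarrow> g1 z + g2 z = \<phi> z / of_real a"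
    using finite_range_unimodular_split[OF cont fin bounded] by blast
  have "norm (of_real a * (g1 z + g2 z) - f z) < e" if "z \<in> K" for z
    using g(5)[OF that] \<phi>(3)[OF that] \<open>a > 0\<close> by (simp add: dist_norm)
  with \<open>a > 0\<close> g(1-4) show ?thesis by (rule that)
qed

theorem mult_op_sums_dense:
  assumes kr: "kronecker_set K" and f: "f \<in> CK K" and "e > 0"
  shows "\<exists>a::real. \<exists>k m::nat. a \<ge> 0 \<and>
       supnorm K (\<lambda>z. of_real a * ((mult_op K ^^ k) (one_K K) z)
                     + of_real a * ((mult_op K ^^ m) (one_K K) z) - f z) < e"
proof -
  have "K \<noteq> {}"
    and kron: "\<And>g \<epsilon>. continuous_on K g \<Longrightarrow> g ` K \<subseteq> sphere 0 1 \<Longrightarrow> \<epsilon> > 0 \<Longrightarrow>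
                 \<exists>n::nat. \<forall>z\<in>K. norm (z ^ n - g z) < \<epsilon>"
    using kr by (auto simp: kronecker_set_def)
  have "continuous_on K f" using f by (simp add: CK_def)
  from kronecker_approx_by_unimodular_sums[OF kr this, of "e/4"] \<open>e > 0\<close>
  obtain a :: real and g1 g2 where "a > 0" and g: "continuous_on K g1" "continuous_on K g2"
    "g1 ` K \<subseteq> sphere 0 1" "g2 ` K \<subseteq> sphere 0 1"
    and close: "\<And>z. z \<in> K \<Longrightarrow> norm (of_real a * (g1 z + g2 z) - f z) < e/4"
    by auto
  have "e / (4 * a) > 0" using \<open>e > 0\<close> \<open>a > 0\<close> by simp
  then obtain k m where k: "\<forall>z\<in>K. norm (z ^ k - g1 z) < e / (4 * a)"
    and m: "\<forall>z\<in>K. norm (z ^ m - g2 z) < e / (4 * a)"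
    using kron[OF g(1,3)] kron[OF g(2,4)] by blast
  have scaled: "norm (of_real a * w) \<le> e/4" if "norm w < e / (4 * a)" for w :: complex
  proof -
    have "a * norm w \<le> a * (e / (4 * a))"
      using that \<open>a > 0\<close> by (intro mult_left_mono) auto
    then show ?thesis using \<open>a > 0\<close> by (simp add: norm_mult)
  qed
  have pointwise: "norm (of_real a * ((mult_op K ^^ k) (one_K K) z)
              + of_real a * ((mult_op K ^^ m) (one_K K) z) - f z) \<le> 3/4 * e" if "z \<in> K" for z
  proof -
    have "of_real a * ((mult_op K ^^ k) (one_K K) z) + of_real a * ((mult_op K ^^ m) (one_K K) z) - f z
        = of_real a * (z ^ k - g1 z) + of_real a * (z ^ m - g2 z) + (of_real a * (g1 z + g2 z) - f z)"
      using that by (simp add: mult_op_iterate one_K_def algebra_simps)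
    also have "norm \<dots> \<le> norm (of_real a * (z ^ k - g1 z)) + norm (of_real a * (z ^ m - g2 z))
        + norm (of_real a * (g1 z + g2 z) - f z)"
      by (intro norm_triangle_le add_right_mono norm_triangle_ineq)
    also have "\<dots> \<le> e/4 + e/4 + e/4"
      using scaled k m close[OF that] that by (intro add_mono) (auto simp: less_imp_le)
    finally show ?thesis by simp
  qed
  have "supnorm K (\<lambda>z. of_real a * ((mult_op K ^^ k) (one_K K) z)
              + of_real a * ((mult_op K ^^ m) (one_K K) z) - f z) \<le> 3/4 * e"
    using pointwise by (rule supnorm_least[OF \<open>K \<noteq> {}\<close>])
  also have "\<dots> < e" using \<open>e > 0\<close> by simp
  finally show ?thesis
    using \<open>a > 0\<close> by (intro exI[of _ a] exI[of _ k] exI[of _ m]) simp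
qed

theorem mainTheorem14:
  fixes K :: "complex set"
  assumes "kronecker_set K" and "\<exists>a\<in>K. \<exists>b\<in>K. a \<noteq> b"
  shows "\<not> weakly_supercyclic K (mult_op K) \<and>
    (\<forall>f\<in>CK K. \<forall>e>0. \<exists>a::real. \<exists>k m::nat. a \<ge> 0 \<and>
       supnorm K (\<lambda>z. of_real a * ((mult_op K ^^ k) (one_K K) z)
                     + of_real a * ((mult_op K ^^ m) (one_K K) z) - f z) < e)"
proof
  obtain a b where "a \<in> K" "b \<in> K" "a \<noteq> b"
    using assms(2) by blast
  then show "\<not> weakly_supercyclic K (mult_op K)"
    by (rule mult_op_not_weakly_supercyclic[OF assms(1)])
  show "\<forall>f\<in>CK K. \<forall>e>0. \<exists>a::real. \<exists>k m::nat. a \<ge> 0 \<and>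
       supnorm K (\<lambda>z. of_real a * ((mult_op K ^^ k) (one_K K) z)
                     + of_real a * ((mult_op K ^^ m) (one_K K) z) - f z) < e"
    using mult_op_sums_dense[OF assms(1)] by blast
qed

end
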